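(* Let $N\ge1$ and let $P_N$ be as in the context. For $t\in(0,\pi)$ with $t\ne\frac{2\pi}{N+2}$, $$\operatorname{Im}P_N(e^{it})=\frac{1-\cos\frac{2\pi}{N+2}}{(N+2)(1-\cos t)}\cdot\frac{\sin t\,\bigl(\sin\frac{(N+2)t}{2}\bigr)^2}{\bigl(\cos t-\cos\frac{2\pi}{N+2}\bigr)^2}.$$ In particular $\operatorname{Im}P_N(e^{it})\ge0$ for all $t\in[0,\pi]$, and $P_N$ (which has real coefficients) is typically real in the unit disc $\mathbb D=\{|z|<1\}$, i.e. $\operatorname{Im}P_N(z)\cdot\operatorname{Im}z\ge0$ for $z\in\mathbb D$.
   Context: For an integer $N\ge1$ put, for $k=1,\dots,N$, $$b_k=\frac{(N-k+3)\sin\frac{(k+1)\pi}{N+2}-(N-k+1)\sin\frac{(k-1)\pi}{N+2}}{(N+2)\sin\frac{\pi}{N+2}},$$ and define $P_N(z)=\frac{1}{\sin\frac{2\pi}{N+2}}\sum_{k=1}^N b_k\sin\frac{k\pi}{N+2}\,z^k$. *)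

theory Defs
  imports "HOL-Analysis.Analysis"
begin

definition b_coef :: "nat \<Rightarrow> nat \<Rightarrow> real" where
  "b_coef N k =
    ((real N - real k + 3) * sin ((real k + 1) * pi / (real N + 2))
      - (real N - real k + 1) * sin ((real k - 1) * pi / (real N + 2)))
    / ((real N + 2) * sin (pi / (real N + 2)))"

definition P_poly :: "nat \<Rightarrow> complex \<Rightarrow> complex" where
  "P_poly N z = complex_of_real (1 / sin (2 * pi / (real N + 2))) *
     (\<Sum>k=1..N. complex_of_real (b_coef N k * sin (real k * pi / (real N + 2))) * z ^ k)"

end

theory Submission
  imports Defs "HOL-Complex_Analysis.Complex_Analysis"
begin

text \<open>Write \<open>m = N + 2\<close> and \<open>x = 2\<pi>/m\<close>. Then \<open>m b\<^sub>k sin (k\<pi>/m) = (m - k) sin (kx) + (1 - cos (kx)) cot (x/2)\<close>,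
  and this weight vanishes at \<open>k = m - 1\<close>, so \<open>Im P\<^sub>N(e\<^sup>i\<^sup>t)\<close> is a sum over \<open>k < m\<close>. Product-to-sum
  formulas split it into two Fejer sums at \<open>t \<mp> x\<close> and three sums of sines at \<open>t, t \<plusminus> x\<close>; since
  \<open>mx = 2\<pi>\<close> all five have closed forms in \<open>cos (mt), sin (mt)\<close>, and a polynomial identity
  assembles them into the stated formula. It is visibly nonnegative on \<open>(0, \<pi>)\<close> away from \<open>t = x\<close>,
  hence by continuity on \<open>[0, \<pi>]\<close>. As \<open>P\<^sub>N\<close> is real on the real axis, the minimum principle for the
  harmonic function \<open>Im P\<^sub>N\<close> on the upper half disc gives \<open>Im P\<^sub>N \<ge> 0\<close> there, and conjugation
  symmetry handles the lower half.\<close>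

lemma sum_cos_mult_closed_form:
  "2 * (1 - cos x) * (\<Sum>k<n. cos (real k * x)) = 1 - cos x + cos (real n * x - x) - cos (real n * x)"
  by (induction n) (simp_all add: algebra_simps cos_add cos_diff)

lemma sum_sin_mult_closed_form:
  "2 * (1 - cos x) * (\<Sum>k<n. sin (real k * x)) = sin x + sin (real n * x - x) - sin (real n * x)"
  by (induction n) (simp_all add: algebra_simps sin_add sin_diff)

lemma fejer_sum_closed_form:
  "2 * (1 - cos x) * (\<Sum>k<n. (real n - real k) * cos (real k * x))
     = real n * (1 - cos x) + 1 - cos (real n * x)"
proof (induction n)
  case 0
  show ?case by simp
next
  case (Suc n)
  have "(\<Sum>k<Suc n. (real (Suc n) - real k) * cos (real k * x))
      = (\<Sum>k<n. (real n - real k) * cos (real k * x)) + (\<Sum>k<Suc n. cos (real k * x))"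
    by (simp add: sum.distrib[symmetric] algebra_simps)
  then show ?case
    using Suc.IH sum_cos_mult_closed_form[of x "Suc n"] by (simp add: algebra_simps)
qed

definition sine_weight :: "nat \<Rightarrow> real \<Rightarrow> nat \<Rightarrow> real" where
  "sine_weight n x k =
     (real n - real k) * sin (real k * x) + (1 - cos (real k * x)) * (1 + cos x) / sin x"

lemma sine_weight_sum_closed_form:
  assumes nx: "real n * x = 2 * pi"
  shows "(\<Sum>k<n. sine_weight n x k * sin (real k * t)) * (4 * (1 - cos t) * (cos t - cos x)^2 * sin x)
       = 2 * (sin x)^2 * (1 - cos x) * sin t * (1 - cos (real n * t))"
proof (cases "sin x = 0")
  case True
  then show ?thesis by simp
next
  case False
  define K where "K = (1 + cos x) / sin x"
  define F1 where "F1 = (\<Sum>k<n. (real n - real k) * cos (real k * (t - x)))"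
  define F2 where "F2 = (\<Sum>k<n. (real n - real k) * cos (real k * (t + x)))"
  define S0 where "S0 = (\<Sum>k<n. sin (real k * t))"
  define S1 where "S1 = (\<Sum>k<n. sin (real k * (t + x)))"
  define S2 where "S2 = (\<Sum>k<n. sin (real k * (t - x)))"
  have K: "K * sin x = 1 + cos x"
    using False by (simp add: K_def)
  have split: "2 * (\<Sum>k<n. sine_weight n x k * sin (real k * t)) = F1 - F2 + K * (2 * S0 - S1 - S2)"
  proof -
    have "2 * (sine_weight n x k * sin (real k * t))
        = (real n - real k) * cos (real k * (t - x)) - (real n - real k) * cos (real k * (t + x))
          + K * (2 * sin (real k * t) - sin (real k * (t + x)) - sin (real k * (t - x)))" for k
      using False by (simp add: sine_weight_def K_def sin_add sin_diff cos_add cos_diff field_simps)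
    then have "2 * (\<Sum>k<n. sine_weight n x k * sin (real k * t))
        = (\<Sum>k<n. (real n - real k) * cos (real k * (t - x)) - (real n - real k) * cos (real k * (t + x))
          + K * (2 * sin (real k * t) - sin (real k * (t + x)) - sin (real k * (t - x))))"
      by (simp add: sum_distrib_left)
    then show ?thesis
      unfolding F1_def F2_def S0_def S1_def S2_def
      by (simp only: sum.distrib sum_subtractf flip: sum_distrib_left)
  qed
  have shift: "real n * (t - x) = real n * t - 2 * pi" "real n * (t + x) = real n * t + 2 * pi"
    using nx by (simp_all add: algebra_simps)
  have F1: "2 * (1 - (cos t * cos x + sin t * sin x)) * F1
      = real n * (1 - (cos t * cos x + sin t * sin x)) + 1 - cos (real n * t)"
    using fejer_sum_closed_form[of "t - x" n] unfolding F1_def[symmetric] shift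
    by (simp add: cos_diff)
  have F2: "2 * (1 - (cos t * cos x - sin t * sin x)) * F2
      = real n * (1 - (cos t * cos x - sin t * sin x)) + 1 - cos (real n * t)"
    using fejer_sum_closed_form[of "t + x" n] unfolding F2_def[symmetric] shift
    by (simp add: cos_add)
  have S0: "2 * (1 - cos t) * S0
      = sin t + (sin (real n * t) * cos t - cos (real n * t) * sin t) - sin (real n * t)"
    using sum_sin_mult_closed_form[of t n] unfolding S0_def[symmetric] by (simp add: sin_diff)
  have S1: "2 * (1 - (cos t * cos x - sin t * sin x)) * S1
      = (sin t * cos x + cos t * sin x) + (sin (real n * t) * cos t - cos (real n * t) * sin t) * cos x
        - (cos (real n * t) * cos t + sin (real n * t) * sin t) * sin x - sin (real n * t)"
    using sum_sin_mult_closed_form[of "t + x" n] unfolding S1_def[symmetric] shift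
    by (simp add: sin_add sin_diff cos_add cos_diff algebra_simps)
  have S2: "2 * (1 - (cos t * cos x + sin t * sin x)) * S2
      = (sin t * cos x - cos t * sin x) + (sin (real n * t) * cos t - cos (real n * t) * sin t) * cos x
        + (cos (real n * t) * cos t + sin (real n * t) * sin t) * sin x - sin (real n * t)"
    using sum_sin_mult_closed_form[of "t - x" n] unfolding S2_def[symmetric] shift
    by (simp add: sin_add sin_diff cos_add cos_diff algebra_simps)
  show ?thesis
    using sin_cos_squared_add2[of t] sin_cos_squared_add2[of x] K split F1 F2 S0 S1 S2 by algebra
qed

lemma sine_weight_last:
  assumes "real (Suc n) * x = 2 * pi"
  shows "sine_weight (Suc n) x n = 0"
proof -
  have "real n * x = 2 * pi - x"
    using assms by (simp add: algebra_simps)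
  then have "sin (real n * x) = - sin x" "cos (real n * x) = cos x"
    by (simp_all add: sin_diff cos_diff)
  then show ?thesis
    using sin_cos_squared_add[of x]
    by (cases "sin x = 0") (simp_all add: sine_weight_def field_simps power2_eq_square)
qed

lemma b_coef_mult_sin:
  assumes "N \<ge> 1"
  shows "b_coef N k * sin (real k * pi / (real N + 2))
       = sine_weight (N + 2) (2 * pi / (real N + 2)) k / (real N + 2)"
proof -
  define m where "m = real N + 2"
  define a where "a = pi / m"
  define u where "u = real k * a"
  have m: "m \<ge> 3"
    using assms by (simp add: m_def)
  have "0 < a"
    using m by (simp add: a_def)
  moreover have "a \<le> pi / 3"
    unfolding a_def using m by (intro divide_left_mono) auto
  ultimately have sa: "sin a > 0" and ca: "cos a > 0"
    by (simp_all add: sin_gt_zero cos_gt_zero)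
  have "b_coef N k * sin (real k * pi / (real N + 2))
      = ((m - real k + 1) * sin (u + a) - (m - real k - 1) * sin (u - a)) / (m * sin a) * sin u"
    using m by (simp add: b_coef_def m_def a_def u_def add_divide_distrib diff_divide_distrib
        algebra_simps)
  also have "\<dots> = sine_weight (N + 2) (2 * pi / (real N + 2)) k / m"
  proof -
    have args: "2 * pi / (real N + 2) = 2 * a" "real k * (2 * a) = 2 * u" "real (N + 2) = m"
      by (simp_all add: u_def a_def m_def)
    show ?thesis
      unfolding sine_weight_def args sin_double cos_double sin_add sin_diff
      using sa ca m
      by (simp add: field_simps) (use sin_cos_squared_add[of u] sin_cos_squared_add[of a] in algebra)
  qed
  finally show ?thesis
    by (simp add: m_def)
qed

lemma Im_P_poly_cis:
  assumes "N \<ge> 1"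
  shows "Im (P_poly N (cis t))
       = (\<Sum>k<N + 2. sine_weight (N + 2) (2 * pi / (real N + 2)) k * sin (real k * t))
         / ((real N + 2) * sin (2 * pi / (real N + 2)))"
proof -
  define x where "x = 2 * pi / (real N + 2)"
  define f where "f k = sine_weight (N + 2) x k * sin (real k * t)" for k
  have "Im (cis t ^ k) = sin (real k * t)" for k
    by (simp only: Complex.DeMoivre) simp
  then have "Im (P_poly N (cis t))
      = (\<Sum>k=1..N. b_coef N k * sin (real k * pi / (real N + 2)) * sin (real k * t)) / sin x"
    by (simp add: P_poly_def x_def Im_sum)
  also have "\<dots> = (\<Sum>k=1..N. f k) / ((real N + 2) * sin x)"
    by (simp add: b_coef_mult_sin[OF assms] f_def x_def sum_divide_distrib)
  also have "(\<Sum>k=1..N. f k) = (\<Sum>k<N + 2. f k)"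
  proof -
    have "real (Suc (Suc N)) * x = 2 * pi"
      by (simp add: x_def add.commute)
    then have "f (Suc N) = 0"
      using sine_weight_last[of "Suc N" x] by (simp add: f_def)
    moreover have "(\<Sum>k<Suc N. f k) = f 0 + (\<Sum>k=1..N. f k)"
      by (simp add: lessThan_Suc_atMost sum.atLeast_Suc_atMost flip: atLeast0AtMost)
    ultimately show ?thesis
      by (simp add: f_def)
  qed
  finally show ?thesis
    by (simp add: f_def x_def)
qed

lemma two_pi_div_bounds:
  assumes "N \<ge> 1"
  shows "0 < 2 * pi / (real N + 2)" "2 * pi / (real N + 2) < pi"
proof -
  have "2 * pi / (real N + 2) \<le> 2 * pi / 3"
    using assms by (intro divide_left_mono) auto
  then show "0 < 2 * pi / (real N + 2)" "2 * pi / (real N + 2) < pi"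
    using pi_gt_zero by (simp, linarith)
qed

lemma Im_P_poly_cis_closed_form:
  assumes N: "N \<ge> 1" and t: "0 < t" "t < pi" "t \<noteq> 2 * pi / (real N + 2)"
  shows "Im (P_poly N (cis t)) =
           (1 - cos (2 * pi / (real N + 2))) / ((real N + 2) * (1 - cos t)) *
           (sin t * (sin ((real N + 2) * t / 2))^2 / (cos t - cos (2 * pi / (real N + 2)))^2)"
proof -
  define m where "m = real N + 2"
  define x where "x = 2 * pi / m"
  have m: "m \<ge> 3"
    using N by (simp add: m_def)
  have x: "0 < x" "x < pi"
    using two_pi_div_bounds[OF N] by (simp_all add: x_def m_def)
  have sin_x: "sin x > 0"
    using x by (simp add: sin_gt_zero)
  define d where "d = 1 - cos t"
  define D where "D = cos t - cos x"
  have "d > 0"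
    using t cos_monotone_0_pi[of 0 t] by (simp add: d_def)
  have "D \<noteq> 0"
    using t x cos_inj_pi[of t x] by (auto simp: D_def x_def m_def)
  define S where "S = (\<Sum>k<N + 2. sine_weight (N + 2) x k * sin (real k * t))"
  have nx: "real (N + 2) * x = 2 * pi" and nm: "real (N + 2) = m"
    by (simp_all add: x_def m_def add.commute)
  have "S * (4 * d * D^2 * sin x) = 2 * (sin x)^2 * (1 - cos x) * sin t * (1 - cos (m * t))"
    using sine_weight_sum_closed_form[OF nx, of t] unfolding S_def nm d_def D_def .
  then have S: "S = 2 * (sin x)^2 * (1 - cos x) * sin t * (1 - cos (m * t)) / (4 * d * D^2 * sin x)"
    using \<open>d > 0\<close> \<open>D \<noteq> 0\<close> sin_x by (simp add: eq_divide_eq)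
  have P: "Im (P_poly N (cis t)) = S / (m * sin x)"
    using Im_P_poly_cis[OF N, of t] unfolding S_def x_def m_def .
  have sin_sq: "(sin (m * t / 2))^2 = (1 - cos (m * t)) / 2"
    using cos_double_sin[of "m * t / 2"] by simp
  have "Im (P_poly N (cis t)) = (1 - cos x) / (m * d) * (sin t * (sin (m * t / 2))^2 / D^2)"
    unfolding P S sin_sq using \<open>d > 0\<close> \<open>D \<noteq> 0\<close> sin_x m
    by (simp add: field_simps power2_eq_square)
  then show ?thesis
    by (simp add: x_def m_def d_def D_def)
qed

lemma continuous_Im_P_poly_cis: "continuous_on A (\<lambda>t. Im (P_poly N (cis t)))"
  unfolding P_poly_def by (intro continuous_intros)

lemma Im_P_poly_cis_nonneg:
  assumes N: "N \<ge> 1" and t: "0 \<le> t" "t \<le> pi"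
  shows "Im (P_poly N (cis t)) \<ge> 0"
proof -
  define x where "x = 2 * pi / (real N + 2)"
  have x: "0 < x" "x < pi"
    using two_pi_div_bounds[OF N] by (simp_all add: x_def)
  have nonneg: "Im (P_poly N (cis s)) \<ge> 0" if "s \<in> {0<..<x} \<union> {x<..<pi}" for s
  proof -
    have s: "0 < s" "s < pi" "s \<noteq> x"
      using that x by auto
    then have "sin s > 0" "cos s < 1"
      using cos_monotone_0_pi[of 0 s] by (simp_all add: sin_gt_zero)
    then show ?thesis
      unfolding Im_P_poly_cis_closed_form[OF N s[unfolded x_def]]
      by (intro mult_nonneg_nonneg divide_nonneg_nonneg divide_nonneg_pos) auto
  qed
  have nonneg_on_closure: "Im (P_poly N (cis t)) \<ge> 0"
    if "t \<in> closure S" "S \<subseteq> {0<..<x} \<union> {x<..<pi}" for S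
    using continuous_ge_on_closure[where f = "\<lambda>t. Im (P_poly N (cis t))"]
      continuous_Im_P_poly_cis nonneg that by blast
  consider "t \<in> closure {0<..<x}" | "t \<in> closure {x<..<pi}"
    using t x by fastforce
  then show ?thesis
    by cases (auto intro: nonneg_on_closure)
qed

lemma Im_P_poly_of_real: "Im (P_poly N (of_real r)) = 0"
  by (simp add: P_poly_def Im_sum flip: of_real_power)

lemma P_poly_cnj: "P_poly N (cnj z) = cnj (P_poly N z)"
  by (simp add: P_poly_def)

lemma Im_P_poly_nonneg_on_upper_half_circle:
  assumes "N \<ge> 1" "norm w = 1" "Im w \<ge> 0"
  shows "Im (P_poly N w) \<ge> 0"
proof -
  have "w \<noteq> 0"
    using assms by auto
  then have "w = cis (Arg w)"
    using assms cis_Arg[of w] by (simp add: sgn_div_norm)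
  moreover have "0 \<le> Arg w" "Arg w \<le> pi"
    using assms Arg_less_0 Arg_bounded by auto
  ultimately show ?thesis
    using Im_P_poly_cis_nonneg[OF \<open>N \<ge> 1\<close>] by metis
qed

lemma Im_P_poly_nonneg_on_upper_half_disc:
  assumes N: "N \<ge> 1" and z: "norm z < 1" "Im z > 0"
  shows "Im (P_poly N z) \<ge> 0"
proof -
  define S where "S = {z. norm z < 1 \<and> 0 < Im z}"
  have "open S"
    unfolding S_def by (intro open_Collect_conj open_Collect_less continuous_intros)
  have "closed {z. norm z \<le> 1 \<and> 0 \<le> Im z}"
    by (intro closed_Collect_conj closed_Collect_le continuous_intros)
  then have "closure S \<subseteq> {z. norm z \<le> 1 \<and> 0 \<le> Im z}"
    by (rule closure_minimal[rotated]) (auto simp: S_def)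
  then have frontier: "norm w = 1 \<and> Im w \<ge> 0 \<or> Im w = 0" if "w \<in> frontier S" for w
    using that interior_open[OF \<open>open S\<close>] by (auto simp: frontier_def S_def)
  have "Re (\<i> * P_poly N z) \<le> 0"
  proof (rule maximum_real_frontier[where f = "\<lambda>w. \<i> * P_poly N w"])
    show "(\<lambda>w. \<i> * P_poly N w) holomorphic_on interior S"
      unfolding P_poly_def by (intro holomorphic_intros)
    show "continuous_on (closure S) (\<lambda>w. \<i> * P_poly N w)"
      unfolding P_poly_def by (intro continuous_intros)
    show "bounded S"
      by (rule bounded_subset[OF bounded_ball[of 0 1]]) (auto simp: S_def)
    show "z \<in> S"
      using z by (simp add: S_def)
  next
    fix w
    assume "w \<in> frontier S"
    then consider "norm w = 1" "Im w \<ge> 0" | "w = of_real (Re w)"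
      using frontier by (auto simp: complex_eq_iff)
    then have "Im (P_poly N w) \<ge> 0"
    proof cases
      case 1
      then show ?thesis by (rule Im_P_poly_nonneg_on_upper_half_circle[OF N])
    next
      case 2
      then show ?thesis by (metis Im_P_poly_of_real order_refl)
    qed
    then show "Re (\<i> * P_poly N w) \<le> 0"
      by simp
  qed
  then show ?thesis
    by simp
qed

lemma P_poly_typically_real:
  assumes N: "N \<ge> 1" and z: "norm z < 1"
  shows "Im (P_poly N z) * Im z \<ge> 0"
proof (cases "Im z" "0 :: real" rule: linorder_cases)
  case less
  then have "Im (P_poly N (cnj z)) \<ge> 0"
    using Im_P_poly_nonneg_on_upper_half_disc[OF N] z by simp
  then show ?thesis
    using less by (simp add: P_poly_cnj mult_nonpos_nonpos)
next
  case greater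
  then show ?thesis
    using Im_P_poly_nonneg_on_upper_half_disc[OF N z] by simp
qed simp

theorem mainTheorem3:
  fixes N :: nat
  assumes "N \<ge> 1"
  shows "(\<forall>t::real. 0 < t \<and> t < pi \<and> t \<noteq> 2 * pi / (real N + 2) \<longrightarrow>
            Im (P_poly N (cis t)) =
              (1 - cos (2 * pi / (real N + 2))) / ((real N + 2) * (1 - cos t)) *
              (sin t * (sin ((real N + 2) * t / 2))^2 / (cos t - cos (2 * pi / (real N + 2)))^2))
       \<and> (\<forall>t::real. 0 \<le> t \<and> t \<le> pi \<longrightarrow> Im (P_poly N (cis t)) \<ge> 0)
       \<and> (\<forall>z::complex. norm z < 1 \<longrightarrow> Im (P_poly N z) * Im z \<ge> 0)"
  using Im_P_poly_cis_closed_form[OF assms] Im_P_poly_cis_nonneg[OF assms]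
    P_poly_typically_real[OF assms] by blast

end
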